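(* Let $n\ge2$. Every sublinear generalized frame function $f:\mathbb{C}^n\to\mathbb{R}$ is identically zero.
   Context: $\mathbb{C}^n$ carries a Hermitian inner product. A generalized frame function is $f:\mathbb{C}^n\to\mathbb{R}$ with $f(0)=0$ and $f(u+v)=f(u)+f(v)$ for every pair of orthogonal vectors $u,v\in\mathbb{C}^n\setminus\{0\}$. $f$ is sublinear if $f(v)/\|v\|\to0$ as $\|v\|\to\infty$. *)

theory Defs
  imports "HOL-Analysis.Analysis"
begin

text \<open>Standard Hermitian inner product on complex^'n (linear in the first argument).
  Its induced norm coincides with the library norm on complex^'n.\<close>
definition herm_inner :: "complex ^ 'n \<Rightarrow> complex ^ 'n \<Rightarrow> complex" where
  "herm_inner u v = (\<Sum>i\<in>UNIV. u $ i * cnj (v $ i))"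

definition herm_orth :: "complex ^ 'n \<Rightarrow> complex ^ 'n \<Rightarrow> bool" where
  "herm_orth u v \<longleftrightarrow> herm_inner u v = 0"

definition gen_frame_function :: "(complex ^ 'n \<Rightarrow> real) \<Rightarrow> bool" where
  "gen_frame_function f \<longleftrightarrow> f 0 = 0 \<and>
     (\<forall>u v. u \<noteq> 0 \<longrightarrow> v \<noteq> 0 \<longrightarrow> herm_orth u v \<longrightarrow> f (u + v) = f u + f v)"

definition sublinear :: "(complex ^ 'n \<Rightarrow> real) \<Rightarrow> bool" where
  "sublinear f \<longleftrightarrow> ((\<lambda>v. f v / norm v) \<longlongrightarrow> 0) at_infinity"

end

theory Submission
  imports Defs
begin

text \<open>For orthogonal \<open>u, v\<close> of equal length, \<open>u + v\<close> and \<open>u - v\<close> are again orthogonal, so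
  \<open>f (2u) = 2 f u + f v + f (-v)\<close>. Writing \<open>S u = f u + f (-u)\<close> and \<open>D u = f u - f (-u)\<close>,
  this forces \<open>S\<close> to be constant on orthogonal pairs of equal length (which exist since \<open>n \<ge> 2\<close>),
  and then \<open>S (2u) = 4 S u\<close> and \<open>D (2u) = 2 D u\<close>. Along \<open>2\<^sup>k u\<close> sublinearity makes
  \<open>S (2\<^sup>k u) / 2\<^sup>k = 2\<^sup>k S u\<close> and \<open>D (2\<^sup>k u) / 2\<^sup>k = D u\<close> tend to \<open>0\<close>, so \<open>S u = D u = 0\<close>.\<close>

lemma herm_inner_add_left: "herm_inner (a + b) c = herm_inner a c + herm_inner b c"
  by (simp add: herm_inner_def distrib_right sum.distrib)

lemma herm_inner_diff_right: "herm_inner a (b - c) = herm_inner a b - herm_inner a c"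
  by (simp add: herm_inner_def right_diff_distrib sum_subtractf)

lemma herm_inner_minus_left: "herm_inner (- a) b = - herm_inner a b"
  by (simp add: herm_inner_def sum_negf)

lemma herm_inner_minus_right: "herm_inner a (- b) = - herm_inner a b"
  by (simp add: herm_inner_def sum_negf)

lemma herm_inner_scaleR_left: "herm_inner (r *\<^sub>R a) b = of_real r * herm_inner a b"
  unfolding herm_inner_def vector_scaleR_component
  by (simp add: scaleR_conv_of_real sum_distrib_left mult_ac)

lemma herm_inner_scaleR_right: "herm_inner a (r *\<^sub>R b) = of_real r * herm_inner a b"
  unfolding herm_inner_def vector_scaleR_component
  by (simp add: scaleR_conv_of_real sum_distrib_left mult_ac)

lemma herm_inner_commute: "herm_inner b a = cnj (herm_inner a b)"
  by (simp add: herm_inner_def mult.commute)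

lemma herm_inner_self: "herm_inner u u = of_real ((norm u)\<^sup>2)"
  by (simp add: herm_inner_def norm_vec_def L2_set_def sum_nonneg complex_norm_square
      del: of_real_power)

lemma herm_orth_commute: "herm_orth u v \<Longrightarrow> herm_orth v u"
  by (simp add: herm_orth_def herm_inner_commute[of v u])

lemma herm_orth_minus_left: "herm_orth u v \<Longrightarrow> herm_orth (- u) v"
  by (simp add: herm_orth_def herm_inner_minus_left)

lemma herm_orth_scaleR: "herm_orth u v \<Longrightarrow> herm_orth (r *\<^sub>R u) (r *\<^sub>R v)"
  by (simp add: herm_orth_def herm_inner_scaleR_left herm_inner_scaleR_right)

lemma exists_orth_nonzero:
  fixes u :: "complex ^ 'n"
  assumes "CARD('n) \<ge> 2"
  shows "\<exists>w. w \<noteq> 0 \<and> herm_orth u w"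
proof -
  obtain i j :: 'n where "i \<noteq> j"
    using assms by (metis card_2_iff' card_le_Suc_iff numeral_2_eq_2 obtain_subset_with_card_n)
  show ?thesis
  proof (cases "u $ i = 0 \<and> u $ j = 0")
    case True
    have "herm_orth u (axis i 1)"
      using True by (simp add: herm_orth_def herm_inner_def axis_def
          if_distrib[of cnj] if_distrib[of "times _"] cong: if_cong)
    then show ?thesis by (metis axis_eq_0_iff one_neq_zero)
  next
    case False
    define w :: "complex ^ 'n"
      where "w = (\<chi> k. if k = i then cnj (u $ j) else if k = j then - cnj (u $ i) else 0)"
    have "w \<noteq> 0"
      using False \<open>i \<noteq> j\<close> by (auto simp: w_def vec_eq_iff)
    moreover have "herm_orth u w"
      using \<open>i \<noteq> j\<close> by (simp add: herm_orth_def herm_inner_def w_def if_distrib sum.If_cases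
          Int_commute mult.commute)
    ultimately show ?thesis by blast
  qed
qed

lemma exists_orth_same_norm:
  fixes u :: "complex ^ 'n"
  assumes "CARD('n) \<ge> 2"
  shows "\<exists>v. herm_orth u v \<and> norm v = norm u"
proof -
  obtain w where "w \<noteq> 0" "herm_orth u w"
    using exists_orth_nonzero[OF assms] by blast
  then have "herm_orth u ((norm u / norm w) *\<^sub>R w) \<and> norm ((norm u / norm w) *\<^sub>R w) = norm u"
    by (simp add: herm_orth_def herm_inner_scaleR_right)
  then show ?thesis by blast
qed

lemma frame_function_zero: "gen_frame_function f \<Longrightarrow> f 0 = 0"
  by (simp add: gen_frame_function_def)

lemma frame_function_add:
  "gen_frame_function f \<Longrightarrow> u \<noteq> 0 \<Longrightarrow> v \<noteq> 0 \<Longrightarrow> herm_orth u v \<Longrightarrow> f (u + v) = f u + f v"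
  by (simp add: gen_frame_function_def)

text \<open>The parallelogram trick: \<open>u + v\<close> and \<open>u - v\<close> are orthogonal and add up to \<open>2u\<close>.\<close>
lemma frame_function_double_orth:
  assumes f: "gen_frame_function f" and "u \<noteq> 0" "v \<noteq> 0" "herm_orth u v"
    and norm_eq: "norm u = norm v"
  shows "f (2 *\<^sub>R u) = 2 * f u + f v + f (- v)"
proof -
  have uv: "herm_inner u v = 0" and vu: "herm_inner v u = 0"
    using \<open>herm_orth u v\<close> herm_orth_commute by (auto simp: herm_orth_def)
  have "herm_inner u u \<noteq> 0"
    using \<open>u \<noteq> 0\<close> by (simp add: herm_inner_self)
  then have "v \<noteq> - u" "v \<noteq> u"
    using uv by (auto simp: herm_inner_minus_right)
  then have "u + v \<noteq> 0" "u - v \<noteq> 0"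
    by (auto simp: add_eq_0_iff2)
  moreover have "herm_orth (u + v) (u - v)"
    using uv vu norm_eq
    by (simp add: herm_orth_def herm_inner_add_left herm_inner_diff_right herm_inner_self)
  ultimately have "f ((u + v) + (u - v)) = f (u + v) + f (u - v)"
    using frame_function_add[OF f] by blast
  also have "\<dots> = 2 * f u + f v + f (- v)"
    using frame_function_add[OF f, of u v] frame_function_add[OF f, of u "- v"] assms(2-4) uv
    by (simp add: herm_orth_def herm_inner_minus_right)
  finally show ?thesis by (simp add: scaleR_2)
qed

lemma frame_function_double_orth_parts:
  assumes f: "gen_frame_function f" and "u \<noteq> 0" "v \<noteq> 0" "herm_orth u v" "norm u = norm v"
  shows "f (2 *\<^sub>R u) + f (- (2 *\<^sub>R u)) = 2 * (f u + f (- u)) + 2 * (f v + f (- v))"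
    and "f (2 *\<^sub>R u) - f (- (2 *\<^sub>R u)) = 2 * (f u - f (- u))"
proof -
  have "f (2 *\<^sub>R (- u)) = 2 * f (- u) + f v + f (- v)"
    using frame_function_double_orth[OF f _ _ herm_orth_minus_left] assms by simp
  moreover have "f (2 *\<^sub>R u) = 2 * f u + f v + f (- v)"
    using frame_function_double_orth[OF f] assms by simp
  ultimately show "f (2 *\<^sub>R u) + f (- (2 *\<^sub>R u)) = 2 * (f u + f (- u)) + 2 * (f v + f (- v))"
    and "f (2 *\<^sub>R u) - f (- (2 *\<^sub>R u)) = 2 * (f u - f (- u))"
    by simp_all
qed

text \<open>Apply the previous lemma to the halves of \<open>u\<close> and \<open>v\<close>, in both orders.\<close>
lemma frame_function_even_orth_eq:
  assumes f: "gen_frame_function f" and "u \<noteq> 0" "v \<noteq> 0" "herm_orth u v" "norm u = norm v"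
  shows "f u + f (- u) = f v + f (- v)"
proof -
  define a b where "a = (1/2) *\<^sub>R u" and "b = (1/2) *\<^sub>R v"
  have ab: "a \<noteq> 0" "b \<noteq> 0" "herm_orth a b" "norm a = norm b"
    using assms herm_orth_scaleR by (auto simp: a_def b_def)
  have "u = 2 *\<^sub>R a" "v = 2 *\<^sub>R b"
    by (simp_all add: a_def b_def)
  then show ?thesis
    using frame_function_double_orth_parts(1)[OF f ab]
      frame_function_double_orth_parts(1)[OF f ab(2,1) herm_orth_commute[OF ab(3)] ab(4)[symmetric]]
    by simp
qed

lemma frame_function_double:
  fixes f :: "complex ^ 'n \<Rightarrow> real"
  assumes "CARD('n) \<ge> 2" and f: "gen_frame_function f" and "u \<noteq> 0"
  shows "f (2 *\<^sub>R u) + f (- (2 *\<^sub>R u)) = 4 * (f u + f (- u))"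
    and "f (2 *\<^sub>R u) - f (- (2 *\<^sub>R u)) = 2 * (f u - f (- u))"
proof -
  obtain v where "herm_orth u v" "norm u = norm v"
    using exists_orth_same_norm[OF assms(1)] by metis
  moreover have "v \<noteq> 0"
    using \<open>u \<noteq> 0\<close> \<open>norm u = norm v\<close> by auto
  ultimately show "f (2 *\<^sub>R u) + f (- (2 *\<^sub>R u)) = 4 * (f u + f (- u))"
    and "f (2 *\<^sub>R u) - f (- (2 *\<^sub>R u)) = 2 * (f u - f (- u))"
    using frame_function_double_orth_parts[OF f \<open>u \<noteq> 0\<close>]
      frame_function_even_orth_eq[OF f \<open>u \<noteq> 0\<close>] by simp_all
qed

lemma frame_function_double_pow:
  fixes f :: "complex ^ 'n \<Rightarrow> real"
  assumes "CARD('n) \<ge> 2" and f: "gen_frame_function f" and "u \<noteq> 0"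
  shows "f ((2^k) *\<^sub>R u) + f (- ((2^k) *\<^sub>R u)) = 4^k * (f u + f (- u))
    \<and> f ((2^k) *\<^sub>R u) - f (- ((2^k) *\<^sub>R u)) = 2^k * (f u - f (- u))"
proof (induction k)
  case (Suc k)
  have double: "(2::real) ^ Suc k *\<^sub>R u = 2 *\<^sub>R ((2^k) *\<^sub>R u)"
    by simp
  have "(2::real)^k *\<^sub>R u \<noteq> 0"
    using \<open>u \<noteq> 0\<close> by simp
  then show ?case
    unfolding double using frame_function_double[OF assms(1,2)] Suc.IH by (simp del: scaleR_scaleR)
qed simp

lemma tendsto_scaleR_pow2_div_pow2:
  fixes g :: "'a::real_normed_vector \<Rightarrow> real"
  assumes "((\<lambda>v. g v / norm v) \<longlongrightarrow> 0) at_infinity" and "u \<noteq> 0"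
  shows "((\<lambda>k. g ((2::real)^k *\<^sub>R u) / 2^k) \<longlongrightarrow> 0) sequentially"
proof -
  have "filterlim (\<lambda>k. norm ((2::real)^k)) at_top sequentially"
    by (intro filterlim_at_infinity_imp_norm_at_top filterlim_realpow_sequentially_gt1) simp
  then have "filterlim (\<lambda>k. (2::real)^k * norm u) at_top sequentially"
    using assms(2) by (intro filterlim_at_top_mult_tendsto_pos[OF tendsto_const]) auto
  then have "filterlim (\<lambda>k. (2::real)^k *\<^sub>R u) at_infinity sequentially"
    by (simp add: filterlim_at_infinity_conv_norm_at_top)
  then have "((\<lambda>k. norm u * (g ((2::real)^k *\<^sub>R u) / norm ((2::real)^k *\<^sub>R u))) \<longlongrightarrow> norm u * 0)
      sequentially"
    by (intro tendsto_mult_left filterlim_compose[OF assms(1)])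
  then show ?thesis
    using assms(2) by simp
qed

lemma pow2_mult_tendsto_zero_imp_zero:
  assumes "((\<lambda>k. (2::real)^k * c) \<longlongrightarrow> 0) sequentially"
  shows "c = 0"
proof -
  have "((\<lambda>k. (2^k * c) * (1/2)^k) \<longlongrightarrow> 0 * 0) sequentially"
    by (intro tendsto_mult assms LIMSEQ_power_zero) simp
  then have "((\<lambda>k. c) \<longlongrightarrow> 0) sequentially"
    by (simp add: power_one_over)
  then show ?thesis
    by (simp add: LIMSEQ_const_iff)
qed

theorem mainTheorem20:
  fixes f :: "complex ^ 'n \<Rightarrow> real"
  assumes "CARD('n) \<ge> 2"
    and "gen_frame_function f"
    and "sublinear f"
  shows "\<forall>v. f v = 0"
proof
  fix u :: "complex ^ 'n"
  show "f u = 0"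
  proof (cases "u = 0")
    case True
    then show ?thesis using frame_function_zero[OF assms(2)] by simp
  next
    case False
    have lim_pos: "(\<lambda>k. f ((2::real)^k *\<^sub>R u) / 2^k) \<longlonglongrightarrow> 0"
      and lim_neg: "(\<lambda>k. f (- ((2::real)^k *\<^sub>R u)) / 2^k) \<longlonglongrightarrow> 0"
      using tendsto_scaleR_pow2_div_pow2[of f u] tendsto_scaleR_pow2_div_pow2[of f "- u"]
        assms(3) False by (simp_all add: sublinear_def)
    have four_pow: "(4::real)^k = 2^k * 2^k" for k
      by (simp flip: power_mult_distrib)
    have "f ((2::real)^k *\<^sub>R u) / 2^k + f (- ((2::real)^k *\<^sub>R u)) / 2^k = 2^k * (f u + f (- u))"
      and "f ((2::real)^k *\<^sub>R u) / 2^k - f (- ((2::real)^k *\<^sub>R u)) / 2^k = f u - f (- u)" for k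
      using frame_function_double_pow[OF assms(1,2) False, of k]
      by (simp_all add: four_pow add_divide_distrib[symmetric] diff_divide_distrib[symmetric])
    then have "(\<lambda>k. 2^k * (f u + f (- u))) \<longlonglongrightarrow> 0" and "(\<lambda>k. f u - f (- u)) \<longlonglongrightarrow> 0"
      using tendsto_add[OF lim_pos lim_neg] tendsto_diff[OF lim_pos lim_neg] by simp_all
    then have "f u + f (- u) = 0" and "f u - f (- u) = 0"
      using pow2_mult_tendsto_zero_imp_zero LIMSEQ_const_iff by blast+
    then show ?thesis by simp
  qed
qed

end
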